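(* Let $G$ be a connected bipartite graph with color classes $E$ and $V$, $\Gamma$ a spanning tree of $G$ inducing the hypertree $\mathbf f$ of $(V,E)$, and $\mathbf f^+=\mathbf f+\frac1{|E|}\mathbf i_E\in\mathbf R^E$. For each $v\in V$ and each edge $\varepsilon$ of $\Gamma$ adjacent to $v$, let $E_{v,\varepsilon}$ be the set of elements of $E$ whose path in $\Gamma$ from $v$ starts with $\varepsilon$, and set $w(\varepsilon)=|E_{v,\varepsilon}|/|E|$ (each edge has a unique endpoint in $V$, so $w$ is well defined on edges of $\Gamma$). Then for each $v$ the weights $w(\varepsilon)$ over edges $\varepsilon$ of $\Gamma$ at $v$ are non-negative and sum to $1$, so $\sum_{v\in V}\sum_{\varepsilon\ni v}w(\varepsilon)\,\mathbf i_{\{e_\varepsilon\}}$ is a point of the Minkowski cell $M_\Gamma$, and this point equals $\mathbf f^+$; that is, these weights are the barycentric coordinates (in the direct sum decomposition of $M_\Gamma$) of $\mathbf f^+$.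
   Context: A hypertree induced by a spanning tree $\Gamma$ is the function $\mathbf f\colon E\to\mathbf N$ with $\mathbf f(e)+1$ equal to the degree of $e$ in $\Gamma$. $\mathbf i_S$ is the indicator vector of $S$. For $v\in V$, $\Delta^\Gamma_v=\operatorname{conv}\{\mathbf i_{\{e\}}\mid ev\text{ an edge of }\Gamma\}\subset\mathbf R^E$, and $M_\Gamma=\sum_{v\in V}\Delta^\Gamma_v$ (Minkowski sum), which is a direct sum: each point has a unique representation as a sum of one point from each $\Delta^\Gamma_v$. A point of $\Delta^\Gamma_v$ is described by barycentric weights on the edges of $\Gamma$ at $v$; $e_\varepsilon\in E$ denotes the endpoint of $\varepsilon$ in $E$. *)

theory Defs
  imports "HOL-Analysis.Analysis"
begin

text \<open>A bipartite graph with colour classes E and V is modelled by two finite types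
 'e (the class E) and 'v (the class V); its edge set is a set of pairs (e,v).\<close>

definition badj :: "('e \<times> 'v) set \<Rightarrow> ('e + 'v) \<Rightarrow> ('e + 'v) \<Rightarrow> bool" where
  "badj G x y \<longleftrightarrow> (\<exists>e v. (e, v) \<in> G \<and>
      ((x = Inl e \<and> y = Inr v) \<or> (x = Inr v \<and> y = Inl e)))"

definition bpath :: "('e \<times> 'v) set \<Rightarrow> ('e + 'v) list \<Rightarrow> bool" where
  "bpath G xs \<longleftrightarrow> xs \<noteq> [] \<and> distinct xs \<and>
      (\<forall>i. Suc i < length xs \<longrightarrow> badj G (xs ! i) (xs ! Suc i))"

definition bconnected :: "('e \<times> 'v) set \<Rightarrow> bool" where
  "bconnected G \<longleftrightarrow> (\<forall>x y. \<exists>xs. bpath G xs \<and> hd xs = x \<and> last xs = y)"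

definition bhas_cycle :: "('e \<times> 'v) set \<Rightarrow> bool" where
  "bhas_cycle G \<longleftrightarrow> (\<exists>xs. 3 \<le> length xs \<and> bpath G xs \<and> badj G (last xs) (hd xs))"

text \<open>Spanning tree of G (vertex set is all of 'e + 'v): connected acyclic subgraph.\<close>
definition spanning_tree :: "('e \<times> 'v) set \<Rightarrow> ('e \<times> 'v) set \<Rightarrow> bool" where
  "spanning_tree G T \<longleftrightarrow> T \<subseteq> G \<and> bconnected T \<and> \<not> bhas_cycle T"

definition hypertree_of :: "('e \<times> 'v) set \<Rightarrow> 'e \<Rightarrow> nat" where
  "hypertree_of T e = card {v. (e, v) \<in> T} - 1"

definition branch :: "('e \<times> 'v) set \<Rightarrow> 'v \<Rightarrow> ('e \<times> 'v) \<Rightarrow> 'e set" where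
  "branch T v \<epsilon> = {e. \<exists>xs. bpath T xs \<and> hd xs = Inr v \<and> last xs = Inl e \<and>
      2 \<le> length xs \<and> xs ! 1 = Inl (fst \<epsilon>)}"

definition weight :: "('e::finite \<times> 'v) set \<Rightarrow> ('e \<times> 'v) \<Rightarrow> real" where
  "weight T \<epsilon> = real (card (branch T (snd \<epsilon>) \<epsilon>)) / real CARD('e)"

text \<open>R^E is real ^ 'e; the indicator vector i_{e} is axis e 1.
 Delta^T_v = conv { i_{e} | ev edge of T }.\<close>
definition Delta :: "('e::finite \<times> 'v) set \<Rightarrow> 'v \<Rightarrow> (real ^ 'e) set" where
  "Delta T v = convex hull {axis e 1 | e. (e, v) \<in> T}"

definition Mcell :: "('e::finite \<times> 'v::finite) set \<Rightarrow> (real ^ 'e) set" where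
  "Mcell T = {(\<Sum>v\<in>UNIV. p v) | p. \<forall>v. p v \<in> Delta T v}"

end

theory Submission
  imports Defs
begin

text \<open>Paths in a tree are unique: two different paths with the same endpoints would close up
  to a cycle. Seen from a vertex \<open>v \<in> V\<close>, every \<open>e' \<in> E\<close> therefore lies in exactly one
  branch \<open>E(v,\<epsilon>)\<close>, so the weights at \<open>v\<close> sum to 1. Seen from \<open>e \<in> E\<close>, the element \<open>e\<close>
  lies in the branch towards \<open>e\<close> of each of its \<open>deg e\<close> neighbours, and every \<open>e' \<noteq> e\<close> in
  that of all but one of them (the first vertex on the path from \<open>e\<close> to \<open>e'\<close>). Double counting
  gives \<open>\<Sum>v. |E(v,(e,v))| = |E| (deg e - 1) + 1\<close>, i.e. the \<open>e\<close>-coordinate of the weighted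
  sum is \<open>f(e) + 1/|E|\<close>.\<close>

lemma bpath_iff_successively:
  "bpath G xs \<longleftrightarrow> xs \<noteq> [] \<and> distinct xs \<and> successively (badj G) xs"
  unfolding bpath_def successively_conv_nth by blast

lemma badj_commute: "badj G x y \<longleftrightarrow> badj G y x"
  unfolding badj_def by blast

lemma badj_simps [simp]:
  "badj G (Inl e) (Inr v) \<longleftrightarrow> (e, v) \<in> G"
  "badj G (Inr v) (Inl e) \<longleftrightarrow> (e, v) \<in> G"
  "\<not> badj G (Inl e) (Inl e')"
  "\<not> badj G (Inr v) (Inr v')"
  unfolding badj_def by auto

lemma badj_InrE:
  assumes "badj G (Inr v) x" obtains e where "x = Inl e" "(e, v) \<in> G"
  using assms by (cases x) auto

lemma badj_InlE:
  assumes "badj G (Inl e) x" obtains v where "x = Inr v" "(e, v) \<in> G"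
  using assms by (cases x) auto

lemma successively_badj_rev:
  "successively (badj G) (rev xs) \<longleftrightarrow> successively (badj G) xs"
  by (simp add: badj_commute[of G])

lemma bpath_Cons_Cons:
  "bpath G (x # y # xs) \<longleftrightarrow> badj G x y \<and> x \<notin> set (y # xs) \<and> bpath G (y # xs)"
  by (auto simp: bpath_iff_successively)

lemma bpath_appendD: "bpath G (xs @ ys) \<Longrightarrow> xs \<noteq> [] \<Longrightarrow> bpath G xs"
  unfolding bpath_iff_successively successively_append_iff by auto

lemma bconnected_bpathE:
  assumes "bconnected G" obtains xs where "bpath G xs" "hd xs = x" "last xs = y"
  using assms unfolding bconnected_def by blast

lemma bpath_ConsE:
  assumes "bpath G xs" "hd xs = x" "last xs \<noteq> x"
  obtains y ys where "xs = x # y # ys" "badj G x y"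
  using assms by (cases xs; cases "tl xs") (auto simp: bpath_def)

text \<open>The cycle follows the first path up to the first vertex \<open>z\<close> it shares with the second
  and returns to \<open>a\<close> along the second.\<close>

lemma diverging_bpaths_has_cycle:
  assumes px: "bpath G (a # xs)" and py: "bpath G (a # ys)"
    and ne: "xs \<noteq> []" "ys \<noteq> []" and last: "last xs = last ys" and hd: "hd xs \<noteq> hd ys"
  shows "bhas_cycle G"
proof -
  have "\<exists>x\<in>set xs. x \<in> set ys" using last ne by (metis last_in_set)
  from split_list_first_prop[OF this] obtain us z r where xs: "xs = us @ z # r"
    and z: "z \<in> set ys" and us: "\<forall>u\<in>set us. u \<notin> set ys"
    by blast
  obtain ps qs where ys: "ys = ps @ z # qs" using z by (meson split_list)
  define c where "c = (a # us @ [z]) @ rev ps"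
  have "bpath G (a # us @ [z])" using px xs bpath_appendD[of G "a # us @ [z]" r] by simp
  then have sx: "successively (badj G) (a # us @ [z])" by (simp add: bpath_iff_successively)
  have "bpath G (a # ps @ [z])" using py ys bpath_appendD[of G "a # ps @ [z]" qs] by simp
  then have sy: "successively (badj G) (a # ps @ [z])" by (simp add: bpath_iff_successively)
  then have "successively (badj G) (z # rev ps)"
    using successively_badj_rev[of G "ps @ [z]"] by (simp add: successively_Cons)
  then have "successively (badj G) c"
    using sx unfolding c_def successively_append_iff by (cases "rev ps") auto
  moreover have "distinct c"
  proof -
    have "distinct (a # us @ z # r)" "distinct (a # ps @ z # qs)"
      using px py xs ys by (simp_all add: bpath_def)
    moreover have "set us \<inter> set ps = {}" using us ys by auto
    ultimately show ?thesis by (auto simp: c_def)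
  qed
  moreover have "3 \<le> length c" using hd xs ys by (cases us; cases ps) (auto simp: c_def)
  moreover have "badj G (last c) (hd c)"
  proof (cases ps)
    case Nil
    then show ?thesis using sy by (simp add: c_def badj_commute)
  next
    case (Cons p ps')
    then show ?thesis using sy by (simp add: c_def badj_commute)
  qed
  ultimately show ?thesis unfolding bhas_cycle_def bpath_iff_successively
    by (metis c_def list.distinct(1) append_Cons)
qed

lemma bpath_unique:
  assumes "\<not> bhas_cycle G"
  shows "bpath G xs \<Longrightarrow> bpath G ys \<Longrightarrow> hd xs = hd ys \<Longrightarrow> last xs = last ys \<Longrightarrow> xs = ys"
proof (induction xs arbitrary: ys)
  case Nil
  then show ?case by (simp add: bpath_def)
next
  case (Cons a xs)
  have "ys \<noteq> []" using Cons.prems(2) by (simp add: bpath_def)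
  then obtain ys' where ys: "ys = a # ys'" using Cons.prems(3) by (cases ys) auto
  have a: "a \<notin> set xs" "a \<notin> set ys'" using Cons.prems(1,2) ys by (simp_all add: bpath_def)
  have last: "last (a # xs) = last (a # ys')" using Cons.prems(4) ys by simp
  consider "xs = []" "ys' = []" | "xs \<noteq> []" "ys' \<noteq> []"
    using a last by (metis last.simps last_in_set)
  then show ?case
  proof cases
    case 1
    then show ?thesis using ys by simp
  next
    case 2
    have "hd xs = hd ys'"
      using diverging_bpaths_has_cycle[of G a xs ys'] Cons.prems(1,2) ys 2 last assms by auto
    moreover have "bpath G xs" and "bpath G ys'"
      using Cons.prems(1,2) 2 ys by (auto simp: bpath_iff_successively successively_Cons)
    moreover have "last xs = last ys'" using last 2 by simp
    ultimately have "xs = ys'" using Cons.IH by blast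
    then show ?thesis using ys by simp
  qed
qed

lemma bpath_Cons_neighbour:
  assumes acyclic: "\<not> bhas_cycle G" and p: "bpath G (x # xs)" and "badj G y x"
    and not_hd: "xs = [] \<or> y \<noteq> hd xs"
  shows "bpath G (y # x # xs)"
proof -
  have "y \<notin> set xs"
  proof
    assume "y \<in> set xs"
    then obtain us ws where xs: "xs = us @ y # ws" by (meson split_list)
    then have "us \<noteq> []" using not_hd by auto
    have "bpath G (x # us @ [y])" using p xs bpath_appendD[of G "x # us @ [y]" ws] by simp
    moreover have "badj G (last (x # us @ [y])) (hd (x # us @ [y]))" using assms(3) by simp
    moreover have "3 \<le> length (x # us @ [y])" using \<open>us \<noteq> []\<close> by (cases us) auto
    ultimately show False using acyclic unfolding bhas_cycle_def by blast
  qed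
  moreover have "y \<noteq> x" using assms(3) by (auto simp: badj_def)
  ultimately show ?thesis using p assms(3) by (simp add: bpath_Cons_Cons)
qed

lemma mem_branch_iff:
  assumes "\<not> bhas_cycle T" and p: "bpath T xs" "hd xs = Inr v" "last xs = Inl e'"
  shows "e' \<in> branch T v \<epsilon> \<longleftrightarrow> xs ! 1 = Inl (fst \<epsilon>)"
proof
  assume "e' \<in> branch T v \<epsilon>"
  then obtain ys where ys: "bpath T ys" "hd ys = Inr v" "last ys = Inl e'" "ys ! 1 = Inl (fst \<epsilon>)"
    unfolding branch_def by blast
  have "xs = ys" using bpath_unique[OF assms(1) p(1) ys(1)] p ys by simp
  then show "xs ! 1 = Inl (fst \<epsilon>)" using ys(4) by simp
next
  assume "xs ! 1 = Inl (fst \<epsilon>)"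
  moreover obtain y ys where "xs = Inr v # y # ys" using p by (auto elim: bpath_ConsE)
  ultimately show "e' \<in> branch T v \<epsilon>" unfolding branch_def using p by auto
qed

lemma branch_at_vertex_unique:
  assumes "\<not> bhas_cycle T" "bconnected T"
  shows "\<exists>!\<epsilon>. \<epsilon> \<in> T \<and> snd \<epsilon> = v \<and> e' \<in> branch T v \<epsilon>"
proof -
  obtain xs where p: "bpath T xs" "hd xs = Inr v" "last xs = Inl e'"
    using assms(2) by (rule bconnected_bpathE)
  then obtain y ys where xs: "xs = Inr v # y # ys" and "badj T (Inr v) y"
    by (auto elim: bpath_ConsE)
  then obtain e where "y = Inl e" "(e, v) \<in> T" by (auto elim: badj_InrE)
  then show ?thesis
    using mem_branch_iff[OF assms(1) p] xs by (intro ex1I[of _ "(e, v)"]) auto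
qed

lemma self_mem_branch: "(e, v) \<in> T \<Longrightarrow> e \<in> branch T v (e, v)"
  unfolding branch_def by (intro CollectI exI[of _ "[Inr v, Inl e]"]) (simp add: bpath_def)

text \<open>\<open>v0\<close> is the second vertex on the path from \<open>e\<close> to \<open>e'\<close>.\<close>

lemma branch_at_element:
  assumes acyclic: "\<not> bhas_cycle T" and "bconnected T" and "e' \<noteq> e"
  obtains v0 where "(e, v0) \<in> T" "\<And>v. (e, v) \<in> T \<Longrightarrow> e' \<in> branch T v (e, v) \<longleftrightarrow> v \<noteq> v0"
proof -
  obtain p where p: "bpath T p" "hd p = Inl e" "last p = Inl e'"
    using assms(2) by (rule bconnected_bpathE)
  then obtain y r where pr: "p = Inl e # y # r" and "badj T (Inl e) y"
    using assms(3) by (auto elim: bpath_ConsE)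
  then obtain v0 where v0: "y = Inr v0" "(e, v0) \<in> T" by (auto elim: badj_InlE)
  have "r \<noteq> []" using p(3) pr v0 by auto
  have q0: "bpath T (Inr v0 # r)" using p(1) pr v0 by (simp add: bpath_Cons_Cons)
  have "distinct p" using p(1) by (simp add: bpath_def)
  then have "hd r \<noteq> Inl e" using pr \<open>r \<noteq> []\<close> by (cases r) auto
  then have "e' \<notin> branch T v0 (e, v0)"
    using mem_branch_iff[OF acyclic q0] p(3) pr \<open>r \<noteq> []\<close> by (cases r) auto
  moreover have "e' \<in> branch T v (e, v)" if "(e, v) \<in> T" "v \<noteq> v0" for v
  proof -
    have "bpath T (Inr v # Inl e # y # r)"
      using bpath_Cons_neighbour[of T "Inl e" "y # r"] acyclic p(1) that pr v0 by simp
    then show ?thesis using mem_branch_iff[OF acyclic, of "Inr v # p"] p pr by simp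
  qed
  ultimately show ?thesis using that v0 by blast
qed

lemma card_branches_at_vertex:
  fixes T :: "('e::finite \<times> 'v::finite) set"
  assumes "\<not> bhas_cycle T" "bconnected T"
  shows "(\<Sum>\<epsilon>\<in>{\<epsilon>\<in>T. snd \<epsilon> = v}. card (branch T (snd \<epsilon>) \<epsilon>)) = CARD('e)"
proof -
  have "card {\<epsilon>\<in>{\<epsilon>\<in>T. snd \<epsilon> = v}. e' \<in> branch T (snd \<epsilon>) \<epsilon>} = 1" for e'
  proof -
    from branch_at_vertex_unique[OF assms(1,2), of v e'] obtain \<epsilon>0
      where "\<epsilon>0 \<in> T \<and> snd \<epsilon>0 = v \<and> e' \<in> branch T v \<epsilon>0"
        and "\<forall>\<epsilon>. \<epsilon> \<in> T \<and> snd \<epsilon> = v \<and> e' \<in> branch T v \<epsilon> \<longrightarrow> \<epsilon> = \<epsilon>0"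
      by (rule ex1E)
    then have "{\<epsilon>\<in>{\<epsilon>\<in>T. snd \<epsilon> = v}. e' \<in> branch T (snd \<epsilon>) \<epsilon>} = {\<epsilon>0}" by auto
    then show ?thesis by simp
  qed
  then show ?thesis
    using sum_multicount[of "{\<epsilon>\<in>T. snd \<epsilon> = v}" "UNIV :: 'e set"
        "\<lambda>\<epsilon> e'. e' \<in> branch T (snd \<epsilon>) \<epsilon>" 1] by simp
qed

lemma bconnected_ex_neighbour:
  assumes "bconnected T" shows "\<exists>v. (e, v) \<in> T"
proof -
  obtain p where p: "bpath T p" "hd p = Inl e" "last p = Inr undefined"
    using assms by (rule bconnected_bpathE)
  then obtain y r where "badj T (Inl e) y" by (auto elim: bpath_ConsE)
  then show ?thesis by (auto elim: badj_InlE)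
qed

lemma card_branches_at_element:
  fixes T :: "('e::finite \<times> 'v::finite) set"
  assumes "\<not> bhas_cycle T" "bconnected T"
  shows "(\<Sum>v\<in>{v. (e, v) \<in> T}. card (branch T v (e, v))) = CARD('e) * (card {v. (e, v) \<in> T} - 1) + 1"
proof -
  define N where "N = {v. (e, v) \<in> T}"
  define d where "d = card N"
  have count: "card {v\<in>N. e' \<in> branch T v (e, v)} = (if e' = e then d else d - 1)" for e'
  proof (cases "e' = e")
    case True
    have "{v\<in>N. e \<in> branch T v (e, v)} = N" using self_mem_branch[of e _ T] by (auto simp: N_def)
    then show ?thesis using True by (simp add: d_def)
  next
    case False
    obtain v0 where "(e, v0) \<in> T" "\<And>v. (e, v) \<in> T \<Longrightarrow> e' \<in> branch T v (e, v) \<longleftrightarrow> v \<noteq> v0"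
      using branch_at_element[OF assms False] by metis
    then have "v0 \<in> N" "{v\<in>N. e' \<in> branch T v (e, v)} = N - {v0}" unfolding N_def by auto
    then show ?thesis using \<open>v0 \<in> N\<close> False by (simp add: d_def)
  qed
  have "(\<Sum>v\<in>N. card (branch T v (e, v))) = (\<Sum>e'\<in>UNIV. if e' = e then d else d - 1)"
    using sum_multicount_gen[of N UNIV "\<lambda>v e'. e' \<in> branch T v (e, v)"] count by simp
  also have "\<dots> = d + (CARD('e) - 1) * (d - 1)"
    by (simp add: sum.remove[of UNIV e] card_Diff_singleton)
  also have "\<dots> = CARD('e) * (d - 1) + 1"
  proof -
    have "N \<noteq> {}" using bconnected_ex_neighbour[OF assms(2), of e] by (simp add: N_def)
    then have "0 < d" by (simp add: d_def card_gt_0_iff)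
    then obtain k where "d = Suc k" using gr0_conv_Suc by blast
    moreover obtain n where "CARD('e) = Suc n" using gr0_conv_Suc[of "CARD('e)"] by auto
    ultimately show ?thesis by simp
  qed
  finally show ?thesis by (simp add: N_def d_def)
qed

lemma sum_weight_at_vertex:
  fixes T :: "('e::finite \<times> 'v::finite) set"
  assumes "\<not> bhas_cycle T" "bconnected T"
  shows "(\<Sum>\<epsilon>\<in>{\<epsilon>\<in>T. snd \<epsilon> = v}. weight T \<epsilon>) = 1"
proof -
  have "(\<Sum>\<epsilon>\<in>{\<epsilon>\<in>T. snd \<epsilon> = v}. weight T \<epsilon>)
      = real (\<Sum>\<epsilon>\<in>{\<epsilon>\<in>T. snd \<epsilon> = v}. card (branch T (snd \<epsilon>) \<epsilon>)) / real CARD('e)"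
    by (simp add: weight_def sum_divide_distrib)
  then show ?thesis using card_branches_at_vertex[OF assms, of v] by (simp flip: of_nat_sum)
qed

lemma sum_weight_at_element:
  fixes T :: "('e::finite \<times> 'v::finite) set"
  assumes "\<not> bhas_cycle T" "bconnected T"
  shows "(\<Sum>v\<in>{v. (e, v) \<in> T}. weight T (e, v)) = real (hypertree_of T e) + 1 / real CARD('e)"
proof -
  have "(\<Sum>v\<in>{v. (e, v) \<in> T}. weight T (e, v))
      = real (\<Sum>v\<in>{v. (e, v) \<in> T}. card (branch T v (e, v))) / real CARD('e)"
    by (simp add: weight_def sum_divide_distrib)
  also have "\<dots> = real (CARD('e) * hypertree_of T e + 1) / real CARD('e)"
    using card_branches_at_element[OF assms, of e] by (simp add: hypertree_of_def)
  also have "\<dots> = real (hypertree_of T e) + 1 / real CARD('e)"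
    by (simp add: field_simps)
  finally show ?thesis .
qed

lemma convex_combination_mem_Delta:
  fixes T :: "('e::finite \<times> 'v::finite) set"
  assumes "\<forall>\<epsilon>\<in>{\<epsilon>\<in>T. snd \<epsilon> = v}. 0 \<le> w \<epsilon>" "sum w {\<epsilon>\<in>T. snd \<epsilon> = v} = 1"
  shows "(\<Sum>\<epsilon>\<in>{\<epsilon>\<in>T. snd \<epsilon> = v}. w \<epsilon> *\<^sub>R axis (fst \<epsilon>) 1) \<in> Delta T v"
  unfolding Delta_def
proof (rule convex_sum)
  show "axis (fst \<epsilon>) 1 \<in> convex hull {axis e 1 |e. (e, v) \<in> T}"
    if "\<epsilon> \<in> {\<epsilon>\<in>T. snd \<epsilon> = v}" for \<epsilon>
    using that by (intro hull_inc) force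
qed (use assms in auto)

lemma sum_weighted_axis_nth:
  fixes T :: "('e::finite \<times> 'v::finite) set"
  shows "(\<Sum>v\<in>UNIV. \<Sum>\<epsilon>\<in>{\<epsilon>\<in>T. snd \<epsilon> = v}. w \<epsilon> *\<^sub>R (axis (fst \<epsilon>) 1 :: real ^ 'e)) $ e
    = (\<Sum>v\<in>{v. (e, v) \<in> T}. w (e, v))"
proof -
  have "(\<Sum>v\<in>UNIV. \<Sum>\<epsilon>\<in>{\<epsilon>\<in>T. snd \<epsilon> = v}. w \<epsilon> *\<^sub>R (axis (fst \<epsilon>) 1 :: real ^ 'e))
      = (\<Sum>\<epsilon>\<in>T. w \<epsilon> *\<^sub>R axis (fst \<epsilon>) 1)"
    using sum.group[of T UNIV snd "\<lambda>\<epsilon>. w \<epsilon> *\<^sub>R (axis (fst \<epsilon>) 1 :: real ^ 'e)"] by simp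
  also have "\<dots> $ e = (\<Sum>\<epsilon>\<in>{\<epsilon>\<in>T. fst \<epsilon> = e}. w \<epsilon>)"
    by (simp add: axis_def sum.inter_filter[symmetric] if_distrib cong: if_cong)
      (rule sum.cong; auto)
  also have "{\<epsilon>\<in>T. fst \<epsilon> = e} = Pair e ` {v. (e, v) \<in> T}" by force
  also have "sum w \<dots> = (\<Sum>v\<in>{v. (e, v) \<in> T}. w (e, v))"
    by (subst sum.reindex) (auto simp: inj_on_def)
  finally show ?thesis .
qed

theorem lemma3p13:
  fixes G T :: "('e::finite \<times> 'v::finite) set"
  assumes "bconnected G"
    and "spanning_tree G T"
  shows "(\<forall>v. (\<forall>\<epsilon>\<in>{\<epsilon>\<in>T. snd \<epsilon> = v}. 0 \<le> weight T \<epsilon>) \<and>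
              (\<Sum>\<epsilon>\<in>{\<epsilon>\<in>T. snd \<epsilon> = v}. weight T \<epsilon>) = 1 \<and>
              (\<Sum>\<epsilon>\<in>{\<epsilon>\<in>T. snd \<epsilon> = v}. weight T \<epsilon> *\<^sub>R axis (fst \<epsilon>) 1) \<in> Delta T v)
     \<and> (\<Sum>v\<in>UNIV. \<Sum>\<epsilon>\<in>{\<epsilon>\<in>T. snd \<epsilon> = v}. weight T \<epsilon> *\<^sub>R (axis (fst \<epsilon>) 1 :: real ^ 'e))
          \<in> Mcell T
     \<and> (\<Sum>v\<in>UNIV. \<Sum>\<epsilon>\<in>{\<epsilon>\<in>T. snd \<epsilon> = v}. weight T \<epsilon> *\<^sub>R (axis (fst \<epsilon>) 1 :: real ^ 'e))
          = (\<chi> e. real (hypertree_of T e) + 1 / real CARD('e))"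
proof -
  have tree: "\<not> bhas_cycle T" "bconnected T" using assms(2) by (auto simp: spanning_tree_def)
  have nonneg: "\<forall>\<epsilon>\<in>{\<epsilon>\<in>T. snd \<epsilon> = v}. 0 \<le> weight T \<epsilon>" for v by (simp add: weight_def)
  note barycentric = nonneg sum_weight_at_vertex[OF tree]
    convex_combination_mem_Delta[OF nonneg sum_weight_at_vertex[OF tree]]
  have "(\<Sum>v\<in>UNIV. \<Sum>\<epsilon>\<in>{\<epsilon>\<in>T. snd \<epsilon> = v}. weight T \<epsilon> *\<^sub>R (axis (fst \<epsilon>) 1 :: real ^ 'e))
      = (\<chi> e. real (hypertree_of T e) + 1 / real CARD('e))"
    unfolding vec_eq_iff sum_weighted_axis_nth sum_weight_at_element[OF tree] by simp
  then show ?thesis using barycentric unfolding Mcell_def by blast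
qed

end
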